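(* Let $M=(X,rk)$ be a matroid on a finite ground set $X$ with rank $r=rk(X)$. Then for every integer $j$ with $j>f_2(M)-r$, \[[y^j]T_M(1,y)=\binom{|X|-j-1}{r-1}-\sum_{\substack{H\in \mathcal{H}(M),\\ |H|>f_2(M)}} \binom{|H|-j-1}{r-1}.\]
   Context: $T_M(x,y)=\sum_{A\subseteq X}(x-1)^{r-rk(A)}(y-1)^{|A|-rk(A)}$ is the Tutte polynomial of $M$, and $[y^j]f(y)$ denotes the coefficient of $y^j$ in $f$. The closure of $A\subseteq X$ is $cl_M(A)=\{e\in X: rk(A\cup\{e\})=rk(A)\}$; a flat is a set $F$ with $cl_M(F)=F$; a hyperplane is a flat of rank $r-1$, and $\mathcal{H}(M)$ is the set of all hyperplanes of $M$. For $k\ge 1$, $f_k(M)=\max\{|F|: F \text{ a flat of } M,\ rk(F)=r-k\}$. *)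

theory Defs
  imports "HOL-Computational_Algebra.Polynomial"
begin

definition matroid :: "'a set \<Rightarrow> ('a set \<Rightarrow> nat) \<Rightarrow> bool" where
  "matroid X rk \<longleftrightarrow> finite X
     \<and> (\<forall>A. A \<subseteq> X \<longrightarrow> rk A \<le> card A)
     \<and> (\<forall>A B. A \<subseteq> B \<and> B \<subseteq> X \<longrightarrow> rk A \<le> rk B)
     \<and> (\<forall>A B. A \<subseteq> X \<and> B \<subseteq> X \<longrightarrow> rk (A \<union> B) + rk (A \<inter> B) \<le> rk A + rk B)"

definition mclosure :: "'a set \<Rightarrow> ('a set \<Rightarrow> nat) \<Rightarrow> 'a set \<Rightarrow> 'a set" where
  "mclosure X rk A = {e \<in> X. rk (insert e A) = rk A}"

definition flat :: "'a set \<Rightarrow> ('a set \<Rightarrow> nat) \<Rightarrow> 'a set \<Rightarrow> bool" where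
  "flat X rk F \<longleftrightarrow> F \<subseteq> X \<and> mclosure X rk F = F"

definition hyperplanes :: "'a set \<Rightarrow> ('a set \<Rightarrow> nat) \<Rightarrow> 'a set set" where
  "hyperplanes X rk = {H. flat X rk H \<and> rk H + 1 = rk X}"

definition fk :: "'a set \<Rightarrow> ('a set \<Rightarrow> nat) \<Rightarrow> nat \<Rightarrow> nat" where
  "fk X rk k = Max {card F | F. flat X rk F \<and> rk F + k = rk X}"

text \<open>Tutte polynomial as a bivariate polynomial: outer variable x, inner variable y.\<close>
definition tutte :: "'a set \<Rightarrow> ('a set \<Rightarrow> nat) \<Rightarrow> int poly poly" where
  "tutte X rk = (\<Sum>A\<in>Pow X. [:[:-1:], 1:] ^ (rk X - rk A) * [: [:-1, 1:] ^ (card A - rk A) :])"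

definition binom_int :: "int \<Rightarrow> nat \<Rightarrow> int" where
  "binom_int n k = (if n < 0 then 0 else int (nat n choose k))"

end

theory Submission
  imports Defs
begin

text \<open>
  Evaluating at x = 1 kills every non-spanning term, so [y^j] T(1,y) is the sum of
  c(|A|) := [y^j] (y-1)^(|A|-r) over the spanning sets A.  Summed over all subsets of an
  m-set, the same quantity gives C(m-j-1, r-1), independently of any matroid structure.
  Moreover c(k) vanishes unless k \<ge> r + j > f_2, and a set of size exceeding f_2 has rank
  at least r - 1; if it is not spanning it lies in exactly one hyperplane, its closure,
  which is then itself larger than f_2.  So the subsets of X counted by C(|X|-j-1, r-1)
  split into the spanning ones and the subsets of the large hyperplanes.  The remaining
  case j = -1 is the same count with c(k) := [k = r - 1], which no spanning set meets.
\<close>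

lemma matroid_finite: "matroid X rk \<Longrightarrow> finite X"
  by (simp add: matroid_def)

lemma matroid_rank_le_card: "matroid X rk \<Longrightarrow> A \<subseteq> X \<Longrightarrow> rk A \<le> card A"
  by (simp add: matroid_def)

lemma matroid_rank_mono: "matroid X rk \<Longrightarrow> A \<subseteq> B \<Longrightarrow> B \<subseteq> X \<Longrightarrow> rk A \<le> rk B"
  by (simp add: matroid_def)

lemma matroid_rank_submod:
  "matroid X rk \<Longrightarrow> A \<subseteq> X \<Longrightarrow> B \<subseteq> X \<Longrightarrow> rk (A \<union> B) + rk (A \<inter> B) \<le> rk A + rk B"
  by (simp add: matroid_def)

lemma matroid_rank_insert_le:
  assumes m: "matroid X rk" and "A \<subseteq> X" and "e \<in> X"
  shows "rk (insert e A) \<le> rk A + 1"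
proof -
  have "rk (A \<union> {e}) + rk (A \<inter> {e}) \<le> rk A + rk {e}"
    using matroid_rank_submod[OF m, of A "{e}"] assms by blast
  moreover have "rk {e} \<le> 1"
    using matroid_rank_le_card[OF m, of "{e}"] assms by auto
  ultimately show ?thesis by auto
qed

lemma matroid_obtain_superset_rank:
  assumes m: "matroid X rk" and A: "A \<subseteq> X" and "rk A \<le> k" and "k \<le> rk X"
  obtains B where "A \<subseteq> B" "B \<subseteq> X" "rk B = k"
proof -
  have "\<exists>B. A \<subseteq> B \<and> B \<subseteq> X \<and> rk B = k" if "finite S" "S \<subseteq> X" "k \<le> rk (A \<union> S)" for S
    using that
  proof (induction S rule: finite_induct)
    case empty
    then show ?case using A \<open>rk A \<le> k\<close> by auto
  next
    case (insert x S)
    show ?case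
    proof (cases "k \<le> rk (A \<union> S)")
      case True
      then show ?thesis using insert by auto
    next
      case False
      have "rk (insert x (A \<union> S)) \<le> rk (A \<union> S) + 1"
        using matroid_rank_insert_le[OF m, of "A \<union> S" x] A insert.prems by auto
      then have "rk (A \<union> insert x S) = k" using False insert.prems by auto
      then show ?thesis using A insert.prems by blast
    qed
  qed
  moreover have "A \<union> X = X" using A by blast
  ultimately show thesis
    using that matroid_finite[OF m] \<open>k \<le> rk X\<close> by (metis order_refl)
qed

section \<open>Closure and flats\<close>

lemma mclosure_subset: "mclosure X rk A \<subseteq> X"
  by (auto simp: mclosure_def)

lemma subset_mclosure: "A \<subseteq> X \<Longrightarrow> A \<subseteq> mclosure X rk A"
  by (auto simp: mclosure_def insert_absorb)

lemma rank_Un_subset_mclosure: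
  assumes m: "matroid X rk" and A: "A \<subseteq> X" and "finite S" "S \<subseteq> mclosure X rk A"
  shows "rk (A \<union> S) = rk A"
  using \<open>finite S\<close> \<open>S \<subseteq> mclosure X rk A\<close>
proof (induction S rule: finite_induct)
  case empty
  then show ?case by simp
next
  case (insert x S)
  have x: "x \<in> X" "rk (insert x A) = rk A" using insert.prems by (auto simp: mclosure_def)
  have S: "S \<subseteq> X" using insert.prems mclosure_subset[of X rk A] by blast
  have IH: "rk (A \<union> S) = rk A" using insert by auto
  have "rk (A \<union> insert x S) + rk ((A \<union> S) \<inter> insert x A) \<le> rk (A \<union> S) + rk (insert x A)"
    using matroid_rank_submod[OF m, of "A \<union> S" "insert x A"] A S x
    by (simp add: insert_commute sup_commute sup_left_commute)
  moreover have "rk A \<le> rk ((A \<union> S) \<inter> insert x A)"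
    using matroid_rank_mono[OF m, of A "(A \<union> S) \<inter> insert x A"] A S by auto
  moreover have "rk A \<le> rk (A \<union> insert x S)"
    using matroid_rank_mono[OF m, of A "A \<union> insert x S"] A S x by auto
  ultimately show ?case using IH x by linarith
qed

lemma rank_mclosure:
  assumes m: "matroid X rk" and A: "A \<subseteq> X"
  shows "rk (mclosure X rk A) = rk A"
proof -
  have "finite (mclosure X rk A)"
    using matroid_finite[OF m] mclosure_subset finite_subset by metis
  then have "rk (A \<union> mclosure X rk A) = rk A"
    using rank_Un_subset_mclosure[OF m A] by blast
  moreover have "A \<union> mclosure X rk A = mclosure X rk A"
    using subset_mclosure[OF A] by blast
  ultimately show ?thesis by simp
qed

lemma flat_mclosure:
  assumes m: "matroid X rk" and A: "A \<subseteq> X"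
  shows "flat X rk (mclosure X rk A)"
proof -
  let ?C = "mclosure X rk A"
  have CX: "?C \<subseteq> X" by (rule mclosure_subset)
  have "e \<in> ?C" if "e \<in> mclosure X rk ?C" for e
  proof -
    have e: "e \<in> X" "rk (insert e ?C) = rk ?C" using that by (auto simp: mclosure_def)
    have "insert e A \<subseteq> insert e ?C" "insert e ?C \<subseteq> X"
      using subset_mclosure[OF A, of rk] CX e by blast+
    then have "rk (insert e A) \<le> rk (insert e ?C)" by (rule matroid_rank_mono[OF m])
    moreover have "rk A \<le> rk (insert e A)"
      using matroid_rank_mono[OF m, of A "insert e A"] A e by blast
    ultimately have "rk (insert e A) = rk A" using e rank_mclosure[OF m A] by linarith
    then show "e \<in> ?C" using e by (simp add: mclosure_def)
  qed
  then have "mclosure X rk ?C \<subseteq> ?C" by blast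
  with subset_mclosure[OF CX, of rk] CX show ?thesis by (simp add: flat_def)
qed

lemma mclosure_subset_flat:
  assumes m: "matroid X rk" and F: "flat X rk F" and "A \<subseteq> F"
  shows "mclosure X rk A \<subseteq> F"
proof
  fix e assume "e \<in> mclosure X rk A"
  then have e: "e \<in> X" "rk (insert e A) = rk A" by (auto simp: mclosure_def)
  have FX: "F \<subseteq> X" using F by (simp add: flat_def)
  have "rk (insert e F) + rk (F \<inter> insert e A) \<le> rk F + rk (insert e A)"
    using matroid_rank_submod[OF m, of F "insert e A"] FX \<open>A \<subseteq> F\<close> e
    by (simp add: insert_absorb2 Un_absorb2 insert_commute)
  moreover have "rk A \<le> rk (F \<inter> insert e A)"
    using matroid_rank_mono[OF m, of A "F \<inter> insert e A"] \<open>A \<subseteq> F\<close> FX by auto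
  moreover have "rk F \<le> rk (insert e F)"
    using matroid_rank_mono[OF m, of F "insert e F"] FX e by auto
  ultimately have "e \<in> mclosure X rk F" using e by (auto simp: mclosure_def)
  then show "e \<in> F" using F by (simp add: flat_def)
qed

lemma flat_eq_if_subset_rank_eq:
  assumes m: "matroid X rk" and F: "flat X rk F" and "F \<subseteq> H" "H \<subseteq> X" "rk F = rk H"
  shows "F = H"
proof
  show "H \<subseteq> F"
  proof
    fix e assume "e \<in> H"
    then have "rk (insert e F) \<le> rk H" "rk F \<le> rk (insert e F)"
      using matroid_rank_mono[OF m, of "insert e F" H] matroid_rank_mono[OF m, of F "insert e F"]
        assms by auto
    then have "e \<in> mclosure X rk F" using \<open>e \<in> H\<close> assms by (auto simp: mclosure_def)
    then show "e \<in> F" using F by (simp add: flat_def)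
  qed
qed (fact \<open>F \<subseteq> H\<close>)

lemma hyperplane_mclosure:
  assumes m: "matroid X rk" and A: "A \<subseteq> X" and "rk A + 1 = rk X"
  shows "mclosure X rk A \<in> hyperplanes X rk"
  using flat_mclosure[OF m A] rank_mclosure[OF m A] assms by (simp add: hyperplanes_def)

lemma subset_hyperplane_iff:
  assumes m: "matroid X rk" and A: "A \<subseteq> X" and "rk A + 1 = rk X"
    and H: "H \<in> hyperplanes X rk"
  shows "A \<subseteq> H \<longleftrightarrow> H = mclosure X rk A"
proof
  assume "A \<subseteq> H"
  have "flat X rk H" "rk H + 1 = rk X" using H by (auto simp: hyperplanes_def)
  then have "mclosure X rk A \<subseteq> H" "H \<subseteq> X"
    using mclosure_subset_flat[OF m _ \<open>A \<subseteq> H\<close>] by (auto simp: flat_def)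
  moreover have "rk (mclosure X rk A) = rk H"
    using rank_mclosure[OF m A] \<open>rk H + 1 = rk X\<close> assms(3) by simp
  ultimately have "mclosure X rk A = H"
    by (rule flat_eq_if_subset_rank_eq[OF m flat_mclosure[OF m A]])
  then show "H = mclosure X rk A" ..
qed (use subset_mclosure[OF A] in simp)

lemma card_le_fk:
  assumes m: "matroid X rk" and A: "A \<subseteq> X" and "rk A + k \<le> rk X"
  shows "card A \<le> fk X rk k"
proof -
  have "rk A \<le> rk X - k" using assms(3) by linarith
  then obtain B where B: "A \<subseteq> B" "B \<subseteq> X" "rk B = rk X - k"
    by (rule matroid_obtain_superset_rank[OF m A]) simp
  let ?C = "mclosure X rk B"
  have "flat X rk ?C" "rk ?C + k = rk X"
    using flat_mclosure[OF m B(2)] rank_mclosure[OF m B(2)] B(3) assms(3) by auto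
  moreover have "finite {card F | F. flat X rk F \<and> rk F + k = rk X}"
    using matroid_finite[OF m] by (auto simp: flat_def)
  ultimately have "card ?C \<le> fk X rk k"
    unfolding fk_def by (intro Max_ge) auto
  moreover have "card A \<le> card ?C"
    using B subset_mclosure[OF B(2)] matroid_finite[OF m]
    by (meson card_mono finite_subset mclosure_subset order_trans)
  ultimately show ?thesis by linarith
qed

lemma fk_ge_rank_diff:
  assumes m: "matroid X rk" and "k \<le> rk X"
  shows "rk X - k \<le> fk X rk k"
proof -
  have "rk {} = 0" using matroid_rank_le_card[OF m, of "{}"] by simp
  then obtain B where B: "B \<subseteq> X" "rk B = rk X - k"
    using matroid_obtain_superset_rank[OF m, of "{}" "rk X - k"] by auto
  then have "rk B \<le> card B" "card B \<le> fk X rk k"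
    using matroid_rank_le_card[OF m B(1)] card_le_fk[OF m B(1), of k] assms(2) by auto
  then show ?thesis using B(2) by linarith
qed

definition large_hyperplanes :: "'a set \<Rightarrow> ('a set \<Rightarrow> nat) \<Rightarrow> 'a set set" where
  "large_hyperplanes X rk = {H \<in> hyperplanes X rk. card H > fk X rk 2}"

lemma finite_large_hyperplanes: "matroid X rk \<Longrightarrow> finite (large_hyperplanes X rk)"
  by (rule finite_subset[of _ "Pow X"])
    (auto simp: large_hyperplanes_def hyperplanes_def flat_def matroid_finite)

lemma card_large_hyperplanes_containing:
  assumes m: "matroid X rk" and A: "A \<subseteq> X" and large: "fk X rk 2 < card A"
  shows "card {H \<in> large_hyperplanes X rk. A \<subseteq> H} = (if rk A = rk X then 0 else 1)"
proof (cases "rk A = rk X")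
  case True
  have "\<not> A \<subseteq> H" if "H \<in> hyperplanes X rk" for H
    using that True matroid_rank_mono[OF m, of A H]
    by (auto simp: hyperplanes_def flat_def)
  then have none: "{H \<in> large_hyperplanes X rk. A \<subseteq> H} = {}"
    by (auto simp: large_hyperplanes_def)
  show ?thesis unfolding none using True by simp
next
  case False
  have "rk A \<le> rk X" "\<not> rk A + 2 \<le> rk X"
    using matroid_rank_mono[OF m A] card_le_fk[OF m A, of 2] large by auto
  then have rA: "rk A + 1 = rk X" using False by linarith
  have "card A \<le> card (mclosure X rk A)"
    using subset_mclosure[OF A] mclosure_subset matroid_finite[OF m]
    by (meson card_mono finite_subset)
  then have "mclosure X rk A \<in> large_hyperplanes X rk"
    using hyperplane_mclosure[OF m A rA] large by (simp add: large_hyperplanes_def)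
  then have "{H \<in> large_hyperplanes X rk. A \<subseteq> H} = {mclosure X rk A}"
    using subset_hyperplane_iff[OF m A rA] by (auto simp: large_hyperplanes_def)
  then show ?thesis using False by simp
qed

section \<open>Counting subsets\<close>

lemma sum_Pow_card:
  fixes c :: "nat \<Rightarrow> 'b::comm_semiring_1"
  assumes "finite S"
  shows "(\<Sum>A\<in>Pow S. c (card A)) = (\<Sum>k\<le>card S. of_nat (card S choose k) * c k)"
proof -
  have "(\<Sum>A\<in>Pow S. c (card A)) = (\<Sum>k\<le>card S. \<Sum>A\<in>{A. A \<in> Pow S \<and> card A = k}. c (card A))"
    using assms by (intro sum.group[symmetric]) (auto intro: card_mono)
  also have "\<dots> = (\<Sum>k\<le>card S. of_nat (card S choose k) * c k)"
  proof (rule sum.cong[OF refl])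
    fix k
    have "{A. A \<in> Pow S \<and> card A = k} = {A. A \<subseteq> S \<and> card A = k}" by auto
    then show "(\<Sum>A\<in>{A. A \<in> Pow S \<and> card A = k}. c (card A)) = of_nat (card S choose k) * c k"
      using n_subsets[OF assms, of k] by simp
  qed
  finally show ?thesis .
qed

lemma sum_Pow_split_large_hyperplanes:
  fixes c :: "nat \<Rightarrow> 'b::comm_semiring_1"
  assumes m: "matroid X rk" and c: "\<And>k. c k \<noteq> 0 \<Longrightarrow> fk X rk 2 < k"
  shows "(\<Sum>A\<in>Pow X. c (card A))
       = (\<Sum>A\<in>{A \<in> Pow X. rk A = rk X}. c (card A))
         + (\<Sum>H\<in>large_hyperplanes X rk. \<Sum>A\<in>Pow H. c (card A))"
proof -
  let ?LH = "large_hyperplanes X rk"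
  have fX: "finite X" by (rule matroid_finite[OF m])
  have LHX: "H \<subseteq> X" if "H \<in> ?LH" for H
    using that by (auto simp: large_hyperplanes_def hyperplanes_def flat_def)
  have "c (card A) = (if rk A = rk X then c (card A) else 0)
                     + (\<Sum>H\<in>{H \<in> ?LH. A \<subseteq> H}. c (card A))" if "A \<in> Pow X" for A
    using card_large_hyperplanes_containing[OF m _ c, of A] that
    by (cases "c (card A) = 0") simp_all
  then have "(\<Sum>A\<in>Pow X. c (card A))
      = (\<Sum>A\<in>Pow X. if rk A = rk X then c (card A) else 0)
        + (\<Sum>A\<in>Pow X. \<Sum>H\<in>{H \<in> ?LH. A \<subseteq> H}. c (card A))"
    unfolding sum.distrib[symmetric] by (rule sum.cong[OF refl])
  also have "(\<Sum>A\<in>Pow X. if rk A = rk X then c (card A) else 0)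
           = (\<Sum>A\<in>{A \<in> Pow X. rk A = rk X}. c (card A))"
    using fX by (intro sum.inter_filter[symmetric]) simp
  also have "(\<Sum>A\<in>Pow X. \<Sum>H\<in>{H \<in> ?LH. A \<subseteq> H}. c (card A))
           = (\<Sum>H\<in>?LH. \<Sum>A\<in>{A \<in> Pow X. A \<subseteq> H}. c (card A))"
    using fX finite_large_hyperplanes[OF m] by (intro sum.swap_restrict) simp_all
  also have "\<dots> = (\<Sum>H\<in>?LH. \<Sum>A\<in>Pow H. c (card A))"
    using LHX by (intro sum.cong refl arg_cong2[where f = sum]) auto
  finally show ?thesis .
qed

lemma spanning_sum_eq_large_hyperplanes_diff:
  fixes c b :: "nat \<Rightarrow> 'b::comm_ring_1"
  assumes m: "matroid X rk" and c: "\<And>k. c k \<noteq> 0 \<Longrightarrow> fk X rk 2 < k"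
    and b: "\<And>n. (\<Sum>k\<le>n. of_nat (n choose k) * c k) = b n"
  shows "(\<Sum>A\<in>{A \<in> Pow X. rk A = rk X}. c (card A))
       = b (card X) - (\<Sum>H\<in>large_hyperplanes X rk. b (card H))"
proof -
  have "finite H" if "H \<in> large_hyperplanes X rk" for H
    using that matroid_finite[OF m] finite_subset
    by (auto simp: large_hyperplanes_def hyperplanes_def flat_def)
  then have "(\<Sum>H\<in>large_hyperplanes X rk. \<Sum>A\<in>Pow H. c (card A))
           = (\<Sum>H\<in>large_hyperplanes X rk. b (card H))"
    by (simp add: sum_Pow_card b)
  then show ?thesis
    using sum_Pow_split_large_hyperplanes[of X rk c, OF m c] sum_Pow_card[OF matroid_finite[OF m], of c] b
    by (simp add: algebra_simps)
qed

section \<open>The generating polynomial\<close>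

definition nullity_power :: "nat \<Rightarrow> nat \<Rightarrow> int poly" where
  "nullity_power r k = (if r \<le> k then [:-1, 1:] ^ (k - r) else 0)"

definition nullity_power_sum :: "nat \<Rightarrow> nat \<Rightarrow> int poly" where
  "nullity_power_sum r n = (\<Sum>k\<le>n. smult (of_nat (n choose k)) (nullity_power r k))"

lemma nullity_power_Suc:
  "1 \<le> r \<Longrightarrow> nullity_power r (Suc k) = [:-1, 1:] * nullity_power r k + of_bool (k = r - 1)"
  by (auto simp: nullity_power_def Suc_diff_le)

lemma nullity_power_sum_Suc:
  assumes r: "1 \<le> r"
  shows "nullity_power_sum r (Suc n) = pCons 0 (nullity_power_sum r n) + [:of_nat (n choose (r - 1)):]"
proof -
  let ?P = "nullity_power r"
  let ?D = "nullity_power_sum r n"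
  have P0: "?P 0 = 0" using r by (simp add: nullity_power_def)
  \<comment> \<open>Pascal's rule splits the sum for n + 1 into the sum for n
      and (y - 1) times it plus C(n, r - 1).\<close>
  have "nullity_power_sum r (Suc n)
      = (\<Sum>k\<le>n. smult (of_nat (n choose k)) (?P (Suc k)))
        + (\<Sum>k\<le>n. smult (of_nat (n choose Suc k)) (?P (Suc k)))"
    unfolding nullity_power_sum_def
    by (subst sum.atMost_Suc_shift) (simp add: P0 sum.distrib smult_add_left)
  also have "(\<Sum>k\<le>n. smult (of_nat (n choose Suc k)) (?P (Suc k)))
      = (\<Sum>k\<le>Suc n. smult (of_nat (n choose k)) (?P k))"
    by (subst sum.atMost_Suc_shift) (simp add: P0)
  also have "\<dots> = ?D"
    by (simp add: nullity_power_sum_def)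
  also have "(\<Sum>k\<le>n. smult (of_nat (n choose k)) (?P (Suc k)))
      = [:-1, 1:] * ?D + (\<Sum>k\<le>n. smult (of_nat (n choose k)) (of_bool (k = r - 1)))"
    unfolding nullity_power_sum_def
    by (simp add: nullity_power_Suc[OF r] smult_add_right sum.distrib sum_distrib_left
        mult_smult_right)
  also have "(\<Sum>k\<le>n. smult (of_nat (n choose k)) (of_bool (k = r - 1)) :: int poly)
      = [:of_nat (n choose (r - 1)):]"
    by (simp add: of_bool_def sum.delta if_distrib[of "smult _"] cong: if_cong)
  finally have "nullity_power_sum r (Suc n) = (1 + [:-1, 1:]) * ?D + [:of_nat (n choose (r - 1)):]"
    by (simp add: algebra_simps)
  moreover have "1 + [:-1, 1:] = [:0, 1 :: int:]" by (simp add: one_pCons)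
  ultimately show ?thesis by simp
qed

lemma coeff_nullity_power_sum:
  assumes r: "1 \<le> r"
  shows "coeff (nullity_power_sum r n) j = binom_int (int n - int j - 1) (r - 1)"
proof (induction n arbitrary: j)
  case 0
  then show ?case using r by (simp add: nullity_power_sum_def nullity_power_def binom_int_def)
next
  case (Suc n)
  then show ?case
    by (cases j) (simp_all add: nullity_power_sum_Suc[OF r] binom_int_def)
qed

section \<open>The Tutte polynomial at x = 1\<close>

lemma poly_tutte_at_1:
  assumes m: "matroid X rk"
  shows "poly (tutte X rk) 1 = (\<Sum>A\<in>{A \<in> Pow X. rk A = rk X}. [:-1, 1:] ^ (card A - rk X))"
proof -
  have x_minus_1_at_1: "[:-1:] + (1 :: int poly) = 0" by (simp add: one_pCons)
  have "poly (tutte X rk) 1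
      = (\<Sum>A\<in>Pow X. if rk A = rk X then [:-1, 1:] ^ (card A - rk X) else 0)"
    unfolding tutte_def poly_sum
  proof (rule sum.cong[OF refl])
    fix A assume "A \<in> Pow X"
    then have "rk A \<le> rk X" using matroid_rank_mono[OF m] by auto
    then show "poly ([:[:-1:], 1:] ^ (rk X - rk A) * [:[:-1, 1:] ^ (card A - rk A):]) 1
             = (if rk A = rk X then [:-1, 1:] ^ (card A - rk X) else (0 :: int poly))"
      by (cases "rk A = rk X") (simp_all add: x_minus_1_at_1)
  qed
  also have "\<dots> = (\<Sum>A\<in>{A \<in> Pow X. rk A = rk X}. [:-1, 1:] ^ (card A - rk X))"
    using matroid_finite[OF m] by (intro sum.inter_filter[symmetric]) simp
  finally show ?thesis .
qed

lemma coeff_tutte_at_1: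
  fixes j :: nat
  assumes m: "matroid X rk" and r: "1 \<le> rk X" and j: "fk X rk 2 < rk X + j"
  shows "coeff (poly (tutte X rk) 1) j
       = binom_int (int (card X) - int j - 1) (rk X - 1)
         - (\<Sum>H\<in>large_hyperplanes X rk. binom_int (int (card H) - int j - 1) (rk X - 1))"
proof -
  let ?c = "\<lambda>k. coeff (nullity_power (rk X) k) j"
  have "fk X rk 2 < k" if "?c k \<noteq> 0" for k
  proof -
    have "rk X \<le> k" using that by (cases "rk X \<le> k") (simp_all add: nullity_power_def)
    then have "j \<le> degree ([:-1, 1:] ^ (k - rk X) :: int poly)"
      using that le_degree by (auto simp: nullity_power_def)
    then have "j \<le> k - rk X" by (simp add: degree_linear_power)
    with j \<open>rk X \<le> k\<close> show ?thesis by linarith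
  qed
  moreover have "(\<Sum>k\<le>n. of_nat (n choose k) * ?c k) = binom_int (int n - int j - 1) (rk X - 1)" for n
    using coeff_nullity_power_sum[OF r, of n j] by (simp add: nullity_power_sum_def coeff_sum)
  ultimately have "(\<Sum>A\<in>{A \<in> Pow X. rk A = rk X}. ?c (card A))
      = binom_int (int (card X) - int j - 1) (rk X - 1)
        - (\<Sum>H\<in>large_hyperplanes X rk. binom_int (int (card H) - int j - 1) (rk X - 1))"
    by (rule spanning_sum_eq_large_hyperplanes_diff[OF m])
  moreover have "coeff (poly (tutte X rk) 1) j = (\<Sum>A\<in>{A \<in> Pow X. rk A = rk X}. ?c (card A))"
    unfolding poly_tutte_at_1[OF m] coeff_sum
  proof (intro sum.cong refl)
    fix A assume "A \<in> {A \<in> Pow X. rk A = rk X}"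
    then have "rk X \<le> card A" using matroid_rank_le_card[OF m, of A] by auto
    then show "coeff ([:-1, 1:] ^ (card A - rk X)) j = ?c (card A)"
      by (simp add: nullity_power_def)
  qed
  ultimately show ?thesis by simp
qed

lemma card_choose_eq_sum_large_hyperplanes:
  assumes m: "matroid X rk" and small: "fk X rk 2 < rk X - 1"
  shows "card X choose (rk X - 1) = (\<Sum>H\<in>large_hyperplanes X rk. card H choose (rk X - 1))"
proof -
  let ?c = "\<lambda>k. of_bool (k = rk X - 1) :: int"
  have "(\<Sum>k\<le>n. of_nat (n choose k) * ?c k) = int (n choose (rk X - 1))" for n
    by (cases "rk X - 1 \<le> n") (auto simp: sum.delta' binomial_eq_0)
  then have "(\<Sum>A\<in>{A \<in> Pow X. rk A = rk X}. ?c (card A))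
      = int (card X choose (rk X - 1)) - (\<Sum>H\<in>large_hyperplanes X rk. int (card H choose (rk X - 1)))"
    using small by (intro spanning_sum_eq_large_hyperplanes_diff[OF m]) auto
  moreover have "(\<Sum>A\<in>{A \<in> Pow X. rk A = rk X}. ?c (card A)) = 0"
    using matroid_rank_le_card[OF m] small by (intro sum.neutral) force
  ultimately show ?thesis by (simp flip: of_nat_sum)
qed

theorem theorem3p2:
  fixes X :: "'a set" and rk :: "'a set \<Rightarrow> nat" and j :: int
  assumes "matroid X rk"
    and "2 \<le> rk X"
    and "j > int (fk X rk 2) - int (rk X)"
  shows "(if j < 0 then 0 else coeff (poly (tutte X rk) 1) (nat j))
         = binom_int (int (card X) - j - 1) (rk X - 1)
           - (\<Sum>H \<in> {H \<in> hyperplanes X rk. card H > fk X rk 2}.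
                binom_int (int (card H) - j - 1) (rk X - 1))"
proof -
  have "rk X - 2 \<le> fk X rk 2" by (rule fk_ge_rank_diff[OF assms(1,2)])
  then have "-1 \<le> j" using assms(2,3) by linarith
  show ?thesis
  proof (cases "j < 0")
    case True
    with \<open>-1 \<le> j\<close> have "j = -1" by simp
    then have "fk X rk 2 < rk X - 1" using assms(3) by linarith
    from card_choose_eq_sum_large_hyperplanes[OF assms(1) this] show ?thesis
      using \<open>j = -1\<close> by (simp add: large_hyperplanes_def binom_int_def flip: of_nat_sum)
  next
    case False
    then obtain n where n: "j = int n" by (metis nonneg_int_cases not_less)
    then have "fk X rk 2 < rk X + n" using assms(3) by linarith
    from coeff_tutte_at_1[OF assms(1) _ this] show ?thesis
      using assms(2) n by (simp add: large_hyperplanes_def)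
  qed
qed

end
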